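(* Let $X,A,M,Y$ be random variables, $R_M,R_Y\in\{0,1\}$, $R_{MY}=R_MR_Y$. Assume $R_M\perp\!\!\!\perp (M,R_Y)\mid X,A,Y$ and $R_Y\perp\!\!\!\perp (Y,R_M)\mid X,A,M$, and that all conditional probabilities $\text{P}(R_M=r_M,R_Y=r_Y\mid X,A,M,Y)$, $(r_M,r_Y)\in\{0,1\}^2$, are positive almost surely. Then almost surely $$\frac{\text{P}(R_M=0,R_Y=0\mid X,A)}{\text{P}(R_M=1,R_Y=1\mid X,A)}=\text{E}\!\left[\text{odds}(R_M=0\mid X,A,M,Y,R_Y=1)\,\text{odds}(R_Y=0\mid X,A,M,Y,R_M=1)\;\Big|\;X,A,R_{MY}=1\right].$$
   Context: $U\perp\!\!\!\perp V\mid W$ denotes conditional independence. $R_M,R_Y$ are the indicators that $M$, $Y$ are observed, $R_{MY}=R_MR_Y$. For a binary $R$ and conditioning variables $Z$, $\text{odds}(R=0\mid Z)=\text{P}(R=0\mid Z)/\text{P}(R=1\mid Z)$. *)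

theory Defs
  imports "HOL-Probability.Probability"
begin

definition gen_sigma :: "'w measure \<Rightarrow> ('w \<Rightarrow> 'b) \<Rightarrow> 'b measure \<Rightarrow> 'w measure" where
  "gen_sigma M f N = vimage_algebra (space M) f N"

definition event_of :: "'w measure \<Rightarrow> ('w \<Rightarrow> bool) \<Rightarrow> 'w set" where
  "event_of M P = {w \<in> space M. P w}"

definition cprob :: "'w measure \<Rightarrow> 'w measure \<Rightarrow> 'w set \<Rightarrow> 'w \<Rightarrow> real" where
  "cprob M F E = real_cond_exp M F (indicator E)"

definition cprob_on :: "'w measure \<Rightarrow> 'w measure \<Rightarrow> 'w set \<Rightarrow> 'w set \<Rightarrow> 'w \<Rightarrow> real" where
  "cprob_on M F E B = (\<lambda>w. cprob M F (E \<inter> B) w / cprob M F B w)"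

definition cexp_on :: "'w measure \<Rightarrow> 'w measure \<Rightarrow> ('w \<Rightarrow> real) \<Rightarrow> 'w set \<Rightarrow> 'w \<Rightarrow> real" where
  "cexp_on M F f B = (\<lambda>w. real_cond_exp M F (\<lambda>v. indicator B v * f v) w / cprob M F B w)"

definition codds_on :: "'w measure \<Rightarrow> 'w measure \<Rightarrow> ('w \<Rightarrow> bool) \<Rightarrow> 'w set \<Rightarrow> 'w \<Rightarrow> real" where
  "codds_on M F R B = (\<lambda>w. cprob_on M F (event_of M (\<lambda>v. \<not> R v)) B w
                          / cprob_on M F (event_of M R) B w)"

definition cond_indep :: "'w measure \<Rightarrow> 'w measure \<Rightarrow> 'w measure \<Rightarrow> 'w measure \<Rightarrow> bool" where
  "cond_indep M F G H \<longleftrightarrow>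
     (\<forall>E1\<in>sets F. \<forall>E2\<in>sets G.
        AE w in M. cprob M H (E1 \<inter> E2) w = cprob M H E1 w * cprob M H E2 w)"

end

theory Submission
  imports Defs
begin

text \<open>
  Let \<open>G\<close> be the sigma-algebra generated by \<open>(X, A, M, Y)\<close>. The first conditional independence
  gives \<open>P(R\<^sub>M = r, R\<^sub>Y = s | G) = P(R\<^sub>M = r | X, A, Y) P(R\<^sub>Y = s | G)\<close> and the second
  \<open>P(R\<^sub>Y = s | G) = P(R\<^sub>Y = s | X, A, M)\<close>, so the four response probabilities given \<open>G\<close> factorize
  as \<open>q(r) q'(s)\<close>. In each conditional odds the normalizing probability cancels, hence the product
  of the two odds is \<open>q(0) q'(0) / (q(1) q'(1)) = P(R\<^sub>M = 0, R\<^sub>Y = 0 | G) / P(R\<^sub>M\<^sub>Y = 1 | G)\<close>.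
  Multiplying by the indicator of \<open>R\<^sub>M\<^sub>Y = 1\<close> and conditioning on \<open>G\<close> and then on \<open>(X, A)\<close>
  gives \<open>P(R\<^sub>M = 0, R\<^sub>Y = 0 | X, A)\<close>. The factorization of conditional probabilities is checked by
  integrating over the intersection-stable generator of preimages of measurable rectangles.
\<close>

section \<open>Generated sigma-algebras\<close>

lemma sets_gen_sigma_subset:
  assumes "f \<in> measurable M N"
  shows "sets (gen_sigma M f N) \<subseteq> sets M"
  unfolding gen_sigma_def by (rule sets_image_in_sets[OF refl assms])

lemma subalgebra_gen_sigma:
  assumes "f \<in> measurable M N"
  shows "subalgebra M (gen_sigma M f N)"
  using sets_gen_sigma_subset[OF assms] unfolding subalgebra_def gen_sigma_def by simp

lemma measurable_gen_sigma:
  assumes "f \<in> measurable M N"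
  shows "f \<in> measurable (gen_sigma M f N) N"
  unfolding gen_sigma_def
  by (rule measurable_vimage_algebra1) (use measurable_space[OF assms] in auto)

lemma subalgebra_gen_sigma_comp:
  assumes "g \<in> measurable M N" "h \<in> measurable N N'"
    and "\<And>w. w \<in> space M \<Longrightarrow> f w = h (g w)"
  shows "subalgebra (gen_sigma M g N) (gen_sigma M f N')"
proof -
  have "(\<lambda>w. h (g w)) \<in> measurable (gen_sigma M g N) N'"
    using measurable_gen_sigma[OF assms(1)] assms(2) by (rule measurable_compose)
  then have "f \<in> measurable (gen_sigma M g N) N'"
    using assms(3) by (subst measurable_cong) (auto simp: gen_sigma_def)
  from sets_image_in_sets[OF _ this] show ?thesis
    unfolding subalgebra_def by (simp add: gen_sigma_def)
qed

lemma gen_sigma_eqI: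
  assumes "f \<in> measurable M N" "g \<in> measurable M N'"
    and "h \<in> measurable N' N" "k \<in> measurable N N'"
    and "\<And>w. w \<in> space M \<Longrightarrow> f w = h (g w)" "\<And>w. w \<in> space M \<Longrightarrow> g w = k (f w)"
  shows "gen_sigma M f N = gen_sigma M g N'"
proof (rule measure_eqI)
  show "sets (gen_sigma M f N) = sets (gen_sigma M g N')"
    using subalgebra_gen_sigma_comp[OF assms(2,3,5)] subalgebra_gen_sigma_comp[OF assms(1,4,6)]
    by (auto simp: subalgebra_def)
qed (simp add: gen_sigma_def vimage_algebra_def emeasure_sigma)

lemma sets_gen_sigma_Pair:
  assumes "f \<in> space M \<rightarrow> space P" "g \<in> space M \<rightarrow> space Q"
  shows "sets (gen_sigma M (\<lambda>w. (f w, g w)) (P \<Otimes>\<^sub>M Q))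
    = sigma_sets (space M) {f -` a \<inter> g -` b \<inter> space M | a b. a \<in> sets P \<and> b \<in> sets Q}"
proof -
  let ?R = "{a \<times> b | a b. a \<in> sets P \<and> b \<in> sets Q}"
  have R: "?R \<subseteq> Pow (space P \<times> space Q)"
    by (rule pair_measure_closed)
  have "sets (gen_sigma M (\<lambda>w. (f w, g w)) (P \<Otimes>\<^sub>M Q))
      = sets (vimage_algebra (space M) (\<lambda>w. (f w, g w)) (sigma (space P \<times> space Q) ?R))"
    unfolding gen_sigma_def
    by (rule sets_vimage_algebra_cong) (simp add: sets_pair_measure sets_measure_of[OF R])
  also have "\<dots> = sets (sigma (space M) {(\<lambda>w. (f w, g w)) -` C \<inter> space M | C. C \<in> ?R})"
    by (subst vimage_algebra_sigma[OF R]) (use assms in auto)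
  also have "{(\<lambda>w. (f w, g w)) -` C \<inter> space M | C. C \<in> ?R}
      = {f -` a \<inter> g -` b \<inter> space M | a b. a \<in> sets P \<and> b \<in> sets Q}"
  proof (intro equalityI subsetI)
    fix S assume "S \<in> {(\<lambda>w. (f w, g w)) -` C \<inter> space M | C. C \<in> ?R}"
    then obtain a b where "a \<in> sets P" "b \<in> sets Q" "S = (\<lambda>w. (f w, g w)) -` (a \<times> b) \<inter> space M"
      by blast
    then show "S \<in> {f -` a \<inter> g -` b \<inter> space M | a b. a \<in> sets P \<and> b \<in> sets Q}"
      by (intro CollectI exI[of _ a] exI[of _ b]) auto
  next
    fix S assume "S \<in> {f -` a \<inter> g -` b \<inter> space M | a b. a \<in> sets P \<and> b \<in> sets Q}"
    then obtain a b where "a \<in> sets P" "b \<in> sets Q" "S = f -` a \<inter> g -` b \<inter> space M"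
      by blast
    then show "S \<in> {(\<lambda>w. (f w, g w)) -` C \<inter> space M | C. C \<in> ?R}"
      by (intro CollectI exI[of _ "a \<times> b"]) auto
  qed
  moreover have "{f -` a \<inter> g -` b \<inter> space M | a b. a \<in> sets P \<and> b \<in> sets Q} \<subseteq> Pow (space M)"
    by auto
  ultimately show ?thesis
    by (simp add: sets_measure_of_conv)
qed

lemma preimage_rectangles_generator:
  assumes "f \<in> space M \<rightarrow> space P" "g \<in> space M \<rightarrow> space Q"
  defines "\<G> \<equiv> {f -` a \<inter> g -` b \<inter> space M | a b. a \<in> sets P \<and> b \<in> sets Q}"
  shows "Int_stable \<G>" "\<G> \<subseteq> Pow (space M)" "space M \<in> \<G>"
proof -
  show "Int_stable \<G>"
  proof (rule Int_stableI)
    fix S S' assume "S \<in> \<G>" "S' \<in> \<G>"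
    then obtain a b a' b' where "a \<in> sets P" "b \<in> sets Q" "a' \<in> sets P" "b' \<in> sets Q"
      and "S = f -` a \<inter> g -` b \<inter> space M" "S' = f -` a' \<inter> g -` b' \<inter> space M"
      unfolding \<G>_def by blast
    then show "S \<inter> S' \<in> \<G>"
      unfolding \<G>_def by (intro CollectI exI[of _ "a \<inter> a'"] exI[of _ "b \<inter> b'"]) auto
  qed
  show "\<G> \<subseteq> Pow (space M)"
    unfolding \<G>_def by blast
  have "space M = f -` space P \<inter> g -` space Q \<inter> space M"
    using assms(1,2) by auto
  then show "space M \<in> \<G>"
    unfolding \<G>_def by blast
qed

section \<open>Conditional probabilities\<close>

lemma event_of_Int: "event_of M P \<inter> event_of M Q = event_of M (\<lambda>v. P v \<and> Q v)"
  by (auto simp: event_of_def)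

lemma event_of_eq_in_gen_sigma: "event_of M (\<lambda>v. R v = r) \<in> sets (gen_sigma M R (count_space UNIV))"
proof -
  have "event_of M (\<lambda>v. R v = r) = R -` {r} \<inter> space M"
    by (auto simp: event_of_def)
  then show ?thesis
    unfolding gen_sigma_def by (simp add: in_vimage_algebra)
qed

lemma (in prob_space) sigma_finite_subalgebra_of_subalgebra:
  assumes "subalgebra M F"
  shows "sigma_finite_subalgebra M F"
  using assms finite_measure_axioms
  by (intro finite_measure_subalgebra_is_sigma_finite)
    (simp add: finite_measure_subalgebra_def finite_measure_subalgebra_axioms_def)

lemma (in prob_space) cprob_nonneg_le_one:
  assumes "subalgebra M F" "E \<in> sets M"
  shows "AE w in M. 0 \<le> cprob M F E w \<and> cprob M F E w \<le> 1"
proof -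
  interpret F: sigma_finite_subalgebra M F
    using assms(1) by (rule sigma_finite_subalgebra_of_subalgebra)
  have ind: "integrable M (indicator E :: 'a \<Rightarrow> real)"
    using assms(2) by (intro integrable_const_bound[where B=1]) (auto split: split_indicator)
  have "AE w in M. 0 \<le> real_cond_exp M F (indicator E) w"
    using assms(2) by (intro F.real_cond_exp_pos) auto
  moreover have "AE w in M. real_cond_exp M F (indicator E) w \<le> real_cond_exp M F (\<lambda>_. 1) w"
    by (rule F.real_cond_exp_mono[OF _ ind]) (auto split: split_indicator)
  moreover have "AE w in M. real_cond_exp M F (\<lambda>_. 1::real) w = 1"
    by (rule F.real_cond_exp_F_meas) simp_all
  ultimately show ?thesis
    unfolding cprob_def by eventually_elim auto
qed

lemma (in prob_space) cprob_space:
  assumes "subalgebra M F"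
  shows "AE w in M. cprob M F (space M) w = 1"
proof -
  interpret F: sigma_finite_subalgebra M F
    using assms by (rule sigma_finite_subalgebra_of_subalgebra)
  have "space M \<in> sets F"
    using assms sets.top[of F] by (simp add: subalgebra_def)
  then have "AE w in M. real_cond_exp M F (indicator (space M)) w = indicator (space M) w"
    by (intro F.real_cond_exp_F_meas borel_measurable_indicator)
      (auto intro!: integrable_const_bound[where B=1] split: split_indicator)
  then show ?thesis
    unfolding cprob_def using AE_space by eventually_elim simp
qed

lemma (in prob_space) integrable_cprob_mult:
  assumes "subalgebra M F" "subalgebra M G" "E \<in> sets M" "D \<in> sets M"
  shows "integrable M (\<lambda>x. cprob M F E x * cprob M G D x)"
proof -
  have "AE x in M. 0 \<le> cprob M F E x \<and> cprob M F E x \<le> 1"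
    using assms(1,3) by (rule cprob_nonneg_le_one)
  moreover have "AE x in M. 0 \<le> cprob M G D x \<and> cprob M G D x \<le> 1"
    using assms(2,4) by (rule cprob_nonneg_le_one)
  ultimately have "AE x in M. norm (cprob M F E x * cprob M G D x) \<le> 1"
    by eventually_elim (auto simp: abs_mult intro: mult_le_one)
  then show ?thesis
    by (intro integrable_const_bound[where B=1]) (simp_all add: cprob_def)
qed

lemma (in sigma_finite_subalgebra) real_cond_exp_eq_nn_cond_exp:
  assumes "integrable M f" "\<And>x. 0 \<le> f x"
  shows "AE x in M. ennreal (real_cond_exp M F f x) = nn_cond_exp M F (\<lambda>x. ennreal (f x)) x"
proof -
  have [measurable]: "f \<in> borel_measurable M"
    using assms(1) by auto
  have neg: "(\<lambda>x. ennreal (- f x)) = (\<lambda>_. 0)"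
    using assms(2) by (auto simp: ennreal_neg)
  have "AE x in M. 0 = nn_cond_exp M F (\<lambda>x. 0) x"
    by (rule nn_cond_exp_F_meas) auto
  moreover have "(\<integral>\<^sup>+x. nn_cond_exp M F (\<lambda>x. ennreal (f x)) x \<partial>M) = (\<integral>\<^sup>+x. ennreal (f x) \<partial>M)"
    using nn_cond_exp_intg[of "\<lambda>_. 1" "\<lambda>x. ennreal (f x)"] by simp
  then have "AE x in M. nn_cond_exp M F (\<lambda>x. ennreal (f x)) x \<noteq> \<infinity>"
    using assms by (intro nn_integral_PInf_AE) (simp_all add: integrable_iff_bounded less_top)
  ultimately show ?thesis
    unfolding real_cond_exp_def neg by eventually_elim (auto simp: ennreal_enn2real_if)
qed

lemma set_integral_space_Diff:
  fixes g :: "'a \<Rightarrow> real"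
  assumes "integrable M g" "A \<in> sets M"
  shows "(\<integral>x\<in>space M - A. g x \<partial>M) = (\<integral>x. g x \<partial>M) - (\<integral>x\<in>A. g x \<partial>M)"
proof -
  have "(\<integral>x\<in>A \<union> (space M - A). g x \<partial>M) = (\<integral>x\<in>A. g x \<partial>M) + (\<integral>x\<in>space M - A. g x \<partial>M)"
    using assms integrable_mult_indicator[OF _ assms(1)]
    by (intro set_integral_Un) (auto simp: set_integrable_def)
  moreover have "A \<union> (space M - A) = space M"
    using sets.sets_into_space[OF assms(2)] by auto
  ultimately show ?thesis
    using set_integral_space[OF assms(1)] by simp
qed

lemma (in sigma_finite_subalgebra) real_cond_exp_charact_generator:
  assumes F: "sets F = sigma_sets (space M) \<G>" "Int_stable \<G>" "\<G> \<subseteq> Pow (space M)" "space M \<in> \<G>"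
    and eq: "\<And>S. S \<in> \<G> \<Longrightarrow> (\<integral>x\<in>S. f x \<partial>M) = (\<integral>x\<in>S. g x \<partial>M)"
    and f: "integrable M f" and g: "integrable M g" "g \<in> borel_measurable F"
  shows "AE x in M. real_cond_exp M F f x = g x"
proof (rule real_cond_exp_charact[OF _ f g])
  have FM: "S \<in> sets M" if "S \<in> sigma_sets (space M) \<G>" for S
    using that F(1) subalg by (auto simp: subalgebra_def)
  fix S assume "S \<in> sets F"
  then have "S \<in> sigma_sets (space M) \<G>"
    using F(1) by simp
  from F(2,3) this show "(\<integral>x\<in>S. f x \<partial>M) = (\<integral>x\<in>S. g x \<partial>M)"
  proof (induction rule: sigma_sets_induct_disjoint)
    case (basic A)
    then show ?case by (rule eq)
  next
    case empty
    then show ?case by (simp add: set_lebesgue_integral_def)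
  next
    case (compl A)
    then show ?case
      using eq[OF F(4)] FM[OF compl(1)] set_integral_space_Diff[OF f] set_integral_space_Diff[OF g(1)]
        set_integral_space[OF f] set_integral_space[OF g(1)]
      by simp
  next
    case (union A)
    have AM: "\<And>i. A i \<in> sets M"
      using union(2) FM by blast
    have disj: "\<And>i j. i \<noteq> j \<Longrightarrow> A i \<inter> A j = {}"
      using union(1) by (auto simp: disjoint_family_on_def)
    have "(\<Union>i. A i) \<in> sets M"
      using AM by blast
    then have "set_integrable M (\<Union>i. A i) f" "set_integrable M (\<Union>i. A i) g"
      unfolding set_integrable_def
      by (rule integrable_mult_indicator[OF _ f], rule integrable_mult_indicator[OF _ g(1)])
    then have "(\<integral>x\<in>(\<Union>i. A i). f x \<partial>M) = (\<Sum>i. \<integral>x\<in>A i. f x \<partial>M)"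
      "(\<integral>x\<in>(\<Union>i. A i). g x \<partial>M) = (\<Sum>i. \<integral>x\<in>A i. g x \<partial>M)"
      by (auto intro!: lebesgue_integral_countable_add AM disj)
    then show ?case
      using union(3) by simp
  qed
qed

section \<open>Conditional independence\<close>

lemma (in prob_space) set_integral_indicator_cond_indep:
  assumes subG: "subalgebra M G" and GH: "subalgebra G H"
    and E: "E \<in> sets M" and D: "D \<in> sets M" and U: "U \<in> sets M"
    and T: "T \<in> sets H" and TU: "T \<inter> U \<in> sets G"
    and CI: "AE w in M. cprob M H (E \<inter> (U \<inter> D)) w = cprob M H E w * cprob M H (U \<inter> D) w"
  shows "(\<integral>x\<in>T \<inter> U. indicator (E \<inter> D) x \<partial>M) = (\<integral>x\<in>T \<inter> U. cprob M H E x * cprob M G D x \<partial>M)"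
proof -
  have subH: "subalgebra M H"
    using subG GH by (auto simp: subalgebra_def)
  interpret G: sigma_finite_subalgebra M G
    using subG by (rule sigma_finite_subalgebra_of_subalgebra)
  interpret H: sigma_finite_subalgebra M H
    using subH by (rule sigma_finite_subalgebra_of_subalgebra)
  define q where "q = cprob M H E"
  have [measurable]: "E \<in> sets M" "D \<in> sets M" "U \<in> sets M" "T \<in> sets M"
    using E D U T subH by (auto simp: subalgebra_def)
  have qH[measurable]: "q \<in> borel_measurable H"
    unfolding q_def cprob_def by simp
  have qG[measurable]: "q \<in> borel_measurable G"
    using GH qH by (rule measurable_from_subalg)
  have qM[measurable]: "q \<in> borel_measurable M"
    unfolding q_def cprob_def by simp
  have q01: "AE x in M. 0 \<le> q x \<and> q x \<le> 1"
    unfolding q_def using subH E by (rule cprob_nonneg_le_one)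
  have bounded: "integrable M (\<lambda>x. indicator V x * q x * indicator W x)"
    if [measurable]: "V \<in> sets M" "W \<in> sets M" for V W
  proof (intro integrable_const_bound[where B=1])
    show "AE x in M. norm (indicator V x * q x * indicator W x) \<le> (1::real)"
      using q01 by eventually_elim (auto split: split_indicator)
  qed simp
  have [measurable]: "T \<in> sets H" "T \<inter> U \<in> sets G"
    using T TU .
  have "(\<integral>x\<in>T \<inter> U. indicator (E \<inter> D) x \<partial>M) = (\<integral>x. (indicator T x :: real) * indicator (E \<inter> (U \<inter> D)) x \<partial>M)"
    unfolding set_lebesgue_integral_def
    by (intro Bochner_Integration.integral_cong) (auto simp: indicator_def)
  also have "\<dots> = (\<integral>x. indicator T x * cprob M H (E \<inter> (U \<inter> D)) x \<partial>M)"
    unfolding cprob_def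
  proof (rule H.real_cond_exp_intg(2)[symmetric])
    show "integrable M (\<lambda>x. indicator T x * indicator (E \<inter> (U \<inter> D)) x :: real)"
      by (intro integrable_const_bound[where B=1]) (auto split: split_indicator)
  qed measurable
  also have "\<dots> = (\<integral>x. (indicator T x * q x) * cprob M H (U \<inter> D) x \<partial>M)"
    using CI unfolding q_def cprob_def by (intro integral_cong_AE) (auto elim!: eventually_mono)
  also have "\<dots> = (\<integral>x. (indicator T x * q x) * indicator (U \<inter> D) x \<partial>M)"
    unfolding cprob_def by (rule H.real_cond_exp_intg(2)[OF bounded]) measurable
  also have "\<dots> = (\<integral>x. (indicator (T \<inter> U) x * q x) * indicator D x \<partial>M)"
    by (intro Bochner_Integration.integral_cong) (auto split: split_indicator)
  also have "\<dots> = (\<integral>x. (indicator (T \<inter> U) x * q x) * cprob M G D x \<partial>M)"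
    unfolding cprob_def by (rule G.real_cond_exp_intg(2)[OF bounded, symmetric]) measurable
  also have "\<dots> = (\<integral>x\<in>T \<inter> U. q x * cprob M G D x \<partial>M)"
    unfolding set_lebesgue_integral_def by (simp add: mult.assoc)
  finally show ?thesis
    unfolding q_def .
qed

lemma (in prob_space) cprob_Int_factor_if_cond_indep:
  assumes [measurable]: "\<psi> \<in> measurable M P" "\<zeta> \<in> measurable M Q" "\<rho> \<in> measurable M R"
    and F: "subalgebra M F" "E \<in> sets F" and B: "B \<in> sets R"
    and CI: "cond_indep M F (gen_sigma M (\<lambda>w. (\<zeta> w, \<rho> w)) (Q \<Otimes>\<^sub>M R)) (gen_sigma M \<psi> P)"
  shows "AE w in M. cprob M (gen_sigma M (\<lambda>w. (\<psi> w, \<zeta> w)) (P \<Otimes>\<^sub>M Q)) (E \<inter> (\<rho> -` B \<inter> space M)) w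
    = cprob M (gen_sigma M \<psi> P) E w
      * cprob M (gen_sigma M (\<lambda>w. (\<psi> w, \<zeta> w)) (P \<Otimes>\<^sub>M Q)) (\<rho> -` B \<inter> space M) w"
proof -
  let ?G = "gen_sigma M (\<lambda>w. (\<psi> w, \<zeta> w)) (P \<Otimes>\<^sub>M Q)" and ?H = "gen_sigma M \<psi> P"
  define \<G> where "\<G> = {\<psi> -` a \<inter> \<zeta> -` b \<inter> space M | a b. a \<in> sets P \<and> b \<in> sets Q}"
  define D where "D = \<rho> -` B \<inter> space M"
  have subG: "subalgebra M ?G"
    by (rule subalgebra_gen_sigma) measurable
  have GH: "subalgebra ?G ?H"
    by (rule subalgebra_gen_sigma_comp[where h=fst]) auto
  have subH: "subalgebra M ?H"
    by (rule subalgebra_gen_sigma) measurable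
  interpret G: sigma_finite_subalgebra M ?G
    using subG by (rule sigma_finite_subalgebra_of_subalgebra)
  have EM[measurable]: "E \<in> sets M"
    using F by (auto simp: subalgebra_def)
  have DM[measurable]: "D \<in> sets M"
    unfolding D_def using B by measurable
  have spaces: "\<psi> \<in> space M \<rightarrow> space P" "\<zeta> \<in> space M \<rightarrow> space Q"
    using measurable_space[OF assms(1)] measurable_space[OF assms(2)] by auto
  have sets_G: "sets ?G = sigma_sets (space M) \<G>"
    unfolding \<G>_def using spaces by (rule sets_gen_sigma_Pair)
  have "AE w in M. real_cond_exp M ?G (indicator (E \<inter> D)) w = cprob M ?H E w * cprob M ?G D w"
  proof (rule G.real_cond_exp_charact_generator[OF sets_G preimage_rectangles_generator[OF spaces, folded \<G>_def]])
    fix S assume "S \<in> \<G>"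
    then obtain a b where ab: "a \<in> sets P" "b \<in> sets Q" and "S = \<psi> -` a \<inter> \<zeta> -` b \<inter> space M"
      unfolding \<G>_def by blast
    then have S: "S = (\<psi> -` a \<inter> space M) \<inter> (\<zeta> -` b \<inter> space M)"
      by blast
    have T: "\<psi> -` a \<inter> space M \<in> sets ?H"
      unfolding gen_sigma_def using ab(1) by (rule in_vimage_algebra)
    have U: "\<zeta> -` b \<inter> space M \<in> sets M"
      using ab(2) by measurable
    have "(\<zeta> -` b \<inter> space M) \<inter> D = (\<lambda>w. (\<zeta> w, \<rho> w)) -` (b \<times> B) \<inter> space M"
      unfolding D_def by auto
    then have "(\<zeta> -` b \<inter> space M) \<inter> D \<in> sets (gen_sigma M (\<lambda>w. (\<zeta> w, \<rho> w)) (Q \<Otimes>\<^sub>M R))"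
      unfolding gen_sigma_def using ab B by (simp add: in_vimage_algebra)
    then have CI_S: "AE w in M. cprob M ?H (E \<inter> ((\<zeta> -` b \<inter> space M) \<inter> D)) w
        = cprob M ?H E w * cprob M ?H ((\<zeta> -` b \<inter> space M) \<inter> D) w"
      using CI F(2) unfolding cond_indep_def by blast
    have "S \<in> sets ?G"
      using \<open>S \<in> \<G>\<close> sets_G by simp
    then show "(\<integral>x\<in>S. indicator (E \<inter> D) x \<partial>M) = (\<integral>x\<in>S. cprob M ?H E x * cprob M ?G D x \<partial>M)"
      unfolding S by (rule set_integral_indicator_cond_indep[OF subG GH EM DM U T _ CI_S])
  next
    show "integrable M (indicator (E \<inter> D) :: 'a \<Rightarrow> real)"
      by (intro integrable_const_bound[where B=1]) (auto split: split_indicator)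
    show "integrable M (\<lambda>x. cprob M ?H E x * cprob M ?G D x)"
      using subH subG EM DM by (rule integrable_cprob_mult)
    have "cprob M ?H E \<in> borel_measurable ?G"
      using GH by (rule measurable_from_subalg) (simp add: cprob_def)
    then show "(\<lambda>x. cprob M ?H E x * cprob M ?G D x) \<in> borel_measurable ?G"
      by (simp add: cprob_def)
  qed
  then show ?thesis
    unfolding cprob_def D_def .
qed

lemma (in prob_space) cprob_eq_if_cond_indep:
  assumes "\<psi> \<in> measurable M P" "\<zeta> \<in> measurable M Q" "\<rho> \<in> measurable M R"
    and "subalgebra M F" "E \<in> sets F"
    and "cond_indep M F (gen_sigma M (\<lambda>w. (\<zeta> w, \<rho> w)) (Q \<Otimes>\<^sub>M R)) (gen_sigma M \<psi> P)"
  shows "AE w in M. cprob M (gen_sigma M (\<lambda>w. (\<psi> w, \<zeta> w)) (P \<Otimes>\<^sub>M Q)) E w = cprob M (gen_sigma M \<psi> P) E w"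
proof -
  have sub: "subalgebra M (gen_sigma M (\<lambda>w. (\<psi> w, \<zeta> w)) (P \<Otimes>\<^sub>M Q))"
    using assms(1,2) by (intro subalgebra_gen_sigma) measurable
  have E: "E \<inter> space M = E"
    using assms(4,5) sets.sets_into_space[of E F] by (auto simp: subalgebra_def)
  have space: "\<rho> -` space R \<inter> space M = space M"
    using measurable_space[OF assms(3)] by auto
  show ?thesis
    using cprob_Int_factor_if_cond_indep[OF assms(1-5) sets.top assms(6)] cprob_space[OF sub]
    unfolding space E by eventually_elim simp
qed

lemma (in prob_space) integrable_mult_indicator_of_weight:
  assumes subG: "subalgebra M G" and g: "g \<in> borel_measurable G" and E: "E \<in> sets M" and E': "E' \<in> sets M"
    and weight: "AE w in M. g w * cprob M G E w = cprob M G E' w"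
  shows "integrable M (\<lambda>w. g w * indicator E w)"
proof -
  interpret G: sigma_finite_subalgebra M G
    using subG by (rule sigma_finite_subalgebra_of_subalgebra)
  have [measurable]: "g \<in> borel_measurable M" "E \<in> sets M" "E' \<in> sets M"
    using measurable_from_subalg[OF subG g] E E' .
  have int_E: "integrable M (indicator E :: 'a \<Rightarrow> real)" and int_E': "integrable M (indicator E' :: 'a \<Rightarrow> real)"
    by (auto intro!: integrable_const_bound[where B=1] split: split_indicator)
  have "AE w in M. ennreal (cprob M G E w) = nn_cond_exp M G (\<lambda>w. ennreal (indicator E w)) w"
    unfolding cprob_def by (rule G.real_cond_exp_eq_nn_cond_exp[OF int_E]) simp
  moreover have "AE w in M. 0 \<le> cprob M G E w \<and> cprob M G E w \<le> 1"
    using subG E by (rule cprob_nonneg_le_one)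
  ultimately have abs_weight: "AE w in M. ennreal \<bar>g w\<bar> * nn_cond_exp M G (\<lambda>w. ennreal (indicator E w)) w
      = ennreal \<bar>cprob M G E' w\<bar>"
    using weight
  proof eventually_elim
    case (elim w)
    then have "\<bar>g w\<bar> * cprob M G E w = \<bar>cprob M G E' w\<bar>"
      by (metis abs_mult abs_of_nonneg)
    with elim show ?case
      by (metis abs_ge_zero ennreal_mult)
  qed
  show ?thesis
    unfolding integrable_iff_bounded
  proof
    have "(\<integral>\<^sup>+w. ennreal (norm (g w * indicator E w)) \<partial>M)
        = (\<integral>\<^sup>+w. ennreal \<bar>g w\<bar> * ennreal (indicator E w) \<partial>M)"
      by (intro nn_integral_cong) (auto split: split_indicator)
    also have "\<dots> = (\<integral>\<^sup>+w. ennreal \<bar>g w\<bar> * nn_cond_exp M G (\<lambda>w. ennreal (indicator E w)) w \<partial>M)"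
      by (rule G.nn_cond_exp_intg[symmetric]) (use g in simp_all)
    also have "\<dots> = (\<integral>\<^sup>+w. ennreal (norm (cprob M G E' w)) \<partial>M)"
      using abs_weight by (intro nn_integral_cong_AE) simp
    also have "\<dots> < \<infinity>"
      using G.real_cond_exp_int(1)[OF int_E'] by (simp add: cprob_def integrable_iff_bounded)
    finally show "(\<integral>\<^sup>+w. ennreal (norm (g w * indicator E w)) \<partial>M) < \<infinity>" .
  qed measurable
qed

lemma (in prob_space) real_cond_exp_indicator_mult_eq_cprob:
  assumes subG: "subalgebra M G" and GF: "subalgebra G F"
    and g: "g \<in> borel_measurable G" and E: "E \<in> sets M" and E': "E' \<in> sets M"
    and weight: "AE w in M. g w * cprob M G E w = cprob M G E' w"
  shows "AE w in M. real_cond_exp M F (\<lambda>w. indicator E w * g w) w = cprob M F E' w"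
proof -
  have subF: "subalgebra M F"
    using subG GF by (auto simp: subalgebra_def)
  interpret G: sigma_finite_subalgebra M G
    using subG by (rule sigma_finite_subalgebra_of_subalgebra)
  interpret F: sigma_finite_subalgebra M F
    using subF by (rule sigma_finite_subalgebra_of_subalgebra)
  have [measurable]: "g \<in> borel_measurable M" "E \<in> sets M" "E' \<in> sets M"
    using measurable_from_subalg[OF subG g] E E' .
  have int_E': "integrable M (indicator E' :: 'a \<Rightarrow> real)"
    by (intro integrable_const_bound[where B=1]) (auto split: split_indicator)
  have int: "integrable M (\<lambda>w. g w * indicator E w)"
    using subG g E E' weight by (rule integrable_mult_indicator_of_weight)
  have comm: "(\<lambda>w. indicator E w * g w) = (\<lambda>w. g w * indicator E w)"
    by (simp add: mult.commute)
  have "AE w in M. real_cond_exp M G (\<lambda>w. g w * indicator E w) w = g w * real_cond_exp M G (indicator E) w"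
    by (rule G.real_cond_exp_mult[OF g _ int]) simp
  then have "AE w in M. real_cond_exp M G (\<lambda>w. g w * indicator E w) w = real_cond_exp M G (indicator E') w"
    using weight unfolding cprob_def by eventually_elim simp
  then have "AE w in M. real_cond_exp M F (real_cond_exp M G (\<lambda>w. g w * indicator E w)) w
      = real_cond_exp M F (real_cond_exp M G (indicator E')) w"
    by (rule F.real_cond_exp_cong) simp_all
  moreover have "AE w in M. real_cond_exp M F (real_cond_exp M G (\<lambda>w. g w * indicator E w)) w
      = real_cond_exp M F (\<lambda>w. g w * indicator E w) w"
    by (rule F.real_cond_exp_nested_subalg[OF subG GF int])
  moreover have "AE w in M. real_cond_exp M F (real_cond_exp M G (indicator E')) w = cprob M F E' w"
    unfolding cprob_def by (rule F.real_cond_exp_nested_subalg[OF subG GF int_E'])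
  ultimately show ?thesis
    unfolding comm by eventually_elim simp
qed

section \<open>The missing-data model\<close>

locale response_model = prob_space M
  for M :: "'w measure"
    and NX :: "'x measure" and NA :: "'a measure" and NM :: "'m measure" and NY :: "'y measure"
    and X :: "'w \<Rightarrow> 'x" and A :: "'w \<Rightarrow> 'a" and Mv :: "'w \<Rightarrow> 'm" and Y :: "'w \<Rightarrow> 'y"
    and RM :: "'w \<Rightarrow> bool" and RY :: "'w \<Rightarrow> bool" +
  assumes measurable_X [measurable]: "X \<in> measurable M NX"
    and measurable_A [measurable]: "A \<in> measurable M NA"
    and measurable_Mv [measurable]: "Mv \<in> measurable M NM"
    and measurable_Y [measurable]: "Y \<in> measurable M NY"
    and measurable_RM [measurable]: "RM \<in> measurable M (count_space UNIV)"
    and measurable_RY [measurable]: "RY \<in> measurable M (count_space UNIV)"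
    and cond_indep_RM: "cond_indep M (gen_sigma M RM (count_space UNIV))
           (gen_sigma M (\<lambda>w. (Mv w, RY w)) (NM \<Otimes>\<^sub>M count_space UNIV))
           (gen_sigma M (\<lambda>w. (X w, A w, Y w)) (NX \<Otimes>\<^sub>M NA \<Otimes>\<^sub>M NY))"
    and cond_indep_RY: "cond_indep M (gen_sigma M RY (count_space UNIV))
           (gen_sigma M (\<lambda>w. (Y w, RM w)) (NY \<Otimes>\<^sub>M count_space UNIV))
           (gen_sigma M (\<lambda>w. (X w, A w, Mv w)) (NX \<Otimes>\<^sub>M NA \<Otimes>\<^sub>M NM))"
    and response_pos: "\<And>rm ry. AE w in M.
           cprob M (gen_sigma M (\<lambda>w. (X w, A w, Mv w, Y w)) (NX \<Otimes>\<^sub>M NA \<Otimes>\<^sub>M NM \<Otimes>\<^sub>M NY))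
             (event_of M (\<lambda>v. RM v = rm \<and> RY v = ry)) w > 0"
begin

abbreviation "sigma_XAMY \<equiv> gen_sigma M (\<lambda>w. (X w, A w, Mv w, Y w)) (NX \<Otimes>\<^sub>M NA \<Otimes>\<^sub>M NM \<Otimes>\<^sub>M NY)"
abbreviation "sigma_XAY \<equiv> gen_sigma M (\<lambda>w. (X w, A w, Y w)) (NX \<Otimes>\<^sub>M NA \<Otimes>\<^sub>M NY)"
abbreviation "sigma_XAM \<equiv> gen_sigma M (\<lambda>w. (X w, A w, Mv w)) (NX \<Otimes>\<^sub>M NA \<Otimes>\<^sub>M NM)"
abbreviation "sigma_XA \<equiv> gen_sigma M (\<lambda>w. (X w, A w)) (NX \<Otimes>\<^sub>M NA)"

lemma subalgebra_sigma_XAMY: "subalgebra M sigma_XAMY"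
  by (rule subalgebra_gen_sigma) measurable

lemma subalgebra_sigma_XAMY_XA: "subalgebra sigma_XAMY sigma_XA"
  by (rule subalgebra_gen_sigma_comp[where h="\<lambda>p. (fst p, fst (snd p))"]) auto

lemma sigma_XAMY_eq_XAY_Mv:
  "sigma_XAMY = gen_sigma M (\<lambda>w. ((X w, A w, Y w), Mv w)) ((NX \<Otimes>\<^sub>M NA \<Otimes>\<^sub>M NY) \<Otimes>\<^sub>M NM)"
  by (rule gen_sigma_eqI[where h="\<lambda>p. (fst (fst p), fst (snd (fst p)), snd p, snd (snd (fst p)))"
        and k="\<lambda>p. ((fst p, fst (snd p), snd (snd (snd p))), fst (snd (snd p)))"])
    auto

lemma sigma_XAMY_eq_XAM_Y:
  "sigma_XAMY = gen_sigma M (\<lambda>w. ((X w, A w, Mv w), Y w)) ((NX \<Otimes>\<^sub>M NA \<Otimes>\<^sub>M NM) \<Otimes>\<^sub>M NY)"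
  by (rule gen_sigma_eqI[where h="\<lambda>p. (fst (fst p), fst (snd (fst p)), snd (snd (fst p)), snd p)"
        and k="\<lambda>p. ((fst p, fst (snd p), fst (snd (snd p))), snd (snd (snd p)))"])
    auto

lemma cprob_RM_eq_given_XAY:
  "AE w in M. cprob M sigma_XAMY (event_of M (\<lambda>v. RM v = r)) w
    = cprob M sigma_XAY (event_of M (\<lambda>v. RM v = r)) w"
  unfolding sigma_XAMY_eq_XAY_Mv
  by (rule cprob_eq_if_cond_indep[OF _ _ _ _ event_of_eq_in_gen_sigma cond_indep_RM])
    (auto intro: subalgebra_gen_sigma)

lemma cprob_RY_eq_given_XAM:
  "AE w in M. cprob M sigma_XAMY (event_of M (\<lambda>v. RY v = s)) w
    = cprob M sigma_XAM (event_of M (\<lambda>v. RY v = s)) w"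
  unfolding sigma_XAMY_eq_XAM_Y
  by (rule cprob_eq_if_cond_indep[OF _ _ _ _ event_of_eq_in_gen_sigma cond_indep_RY])
    (auto intro: subalgebra_gen_sigma)

lemma cprob_response_factorizes:
  "AE w in M. cprob M sigma_XAMY (event_of M (\<lambda>v. RM v = r \<and> RY v = s)) w
    = cprob M sigma_XAY (event_of M (\<lambda>v. RM v = r)) w * cprob M sigma_XAM (event_of M (\<lambda>v. RY v = s)) w"
proof -
  have joint: "event_of M (\<lambda>v. RM v = r \<and> RY v = s) = event_of M (\<lambda>v. RM v = r) \<inter> (RY -` {s} \<inter> space M)"
    and RY: "RY -` {s} \<inter> space M = event_of M (\<lambda>v. RY v = s)"
    by (auto simp: event_of_def)
  have "AE w in M. cprob M sigma_XAMY (event_of M (\<lambda>v. RM v = r) \<inter> (RY -` {s} \<inter> space M)) w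
    = cprob M sigma_XAY (event_of M (\<lambda>v. RM v = r)) w * cprob M sigma_XAMY (RY -` {s} \<inter> space M) w"
    unfolding sigma_XAMY_eq_XAY_Mv
    by (rule cprob_Int_factor_if_cond_indep[OF _ _ _ _ event_of_eq_in_gen_sigma _ cond_indep_RM])
      (auto intro: subalgebra_gen_sigma)
  then show ?thesis
    using cprob_RY_eq_given_XAM[of s] unfolding joint RY by eventually_elim simp
qed

lemma odds_product_mult_cprob:
  "AE w in M. codds_on M sigma_XAMY RM (event_of M RY) w * codds_on M sigma_XAMY RY (event_of M RM) w
      * cprob M sigma_XAMY (event_of M (\<lambda>v. RM v \<and> RY v)) w
    = cprob M sigma_XAMY (event_of M (\<lambda>v. \<not> RM v \<and> \<not> RY v)) w"
proof -
  define p where "p r s = cprob M sigma_XAMY (event_of M (\<lambda>v. RM v = r \<and> RY v = s))" for r s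
  define q where "q r = cprob M sigma_XAY (event_of M (\<lambda>v. RM v = r))" for r
  define q' where "q' s = cprob M sigma_XAM (event_of M (\<lambda>v. RY v = s))" for s
  have odds_RM: "codds_on M sigma_XAMY RM (event_of M RY)
      = (\<lambda>w. (p False True w / cprob M sigma_XAMY (event_of M RY) w)
           / (p True True w / cprob M sigma_XAMY (event_of M RY) w))"
    and odds_RY: "codds_on M sigma_XAMY RY (event_of M RM)
      = (\<lambda>w. (p True False w / cprob M sigma_XAMY (event_of M RM) w)
           / (p True True w / cprob M sigma_XAMY (event_of M RM) w))"
    unfolding codds_on_def cprob_on_def p_def event_of_Int by (simp_all add: conj_commute)
  have p11: "cprob M sigma_XAMY (event_of M (\<lambda>v. RM v \<and> RY v)) = p True True"
    and p00: "cprob M sigma_XAMY (event_of M (\<lambda>v. \<not> RM v \<and> \<not> RY v)) = p False False"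
    by (simp_all add: p_def)
  have "AE w in M. \<forall>r s. p r s w = q r w * q' s w \<and> p r s w > 0"
    unfolding AE_all_countable AE_conj_iff p_def q_def q'_def
    using cprob_response_factorizes response_pos by blast
  moreover have "AE w in M. cprob M sigma_XAMY (event_of M RY) w = q' True w"
    and "AE w in M. cprob M sigma_XAMY (event_of M RM) w = q True w"
    using cprob_RY_eq_given_XAM[of True] cprob_RM_eq_given_XAY[of True] by (simp_all add: q_def q'_def)
  ultimately show ?thesis
    unfolding odds_RM odds_RY p11 p00
  proof eventually_elim
    case (elim w)
    then have "q r w \<noteq> 0" "q' s w \<noteq> 0" for r s
      by (metis mult_eq_0_iff less_irrefl)+
    with elim show ?case
      by (simp add: field_simps)
  qed
qed

lemma measurable_odds_product:
  "(\<lambda>w. codds_on M sigma_XAMY RM (event_of M RY) w * codds_on M sigma_XAMY RY (event_of M RM) w)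
    \<in> borel_measurable sigma_XAMY"
proof -
  interpret sigma_finite_subalgebra M sigma_XAMY
    using subalgebra_sigma_XAMY by (rule sigma_finite_subalgebra_of_subalgebra)
  show ?thesis
    unfolding codds_on_def cprob_on_def cprob_def by measurable
qed

end

theorem mainTheorem5:
  fixes M :: "'w measure"
    and NX :: "'x measure" and NA :: "'a measure" and NM :: "'m measure" and NY :: "'y measure"
    and X :: "'w \<Rightarrow> 'x" and A :: "'w \<Rightarrow> 'a" and Mv :: "'w \<Rightarrow> 'm" and Y :: "'w \<Rightarrow> 'y"
    and RM :: "'w \<Rightarrow> bool" and RY :: "'w \<Rightarrow> bool"
  assumes "prob_space M"
    and "X \<in> measurable M NX" and "A \<in> measurable M NA"
    and "Mv \<in> measurable M NM" and "Y \<in> measurable M NY"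
    and "RM \<in> measurable M (count_space UNIV)" and "RY \<in> measurable M (count_space UNIV)"
    and "cond_indep M (gen_sigma M RM (count_space UNIV))
           (gen_sigma M (\<lambda>w. (Mv w, RY w)) (NM \<Otimes>\<^sub>M count_space UNIV))
           (gen_sigma M (\<lambda>w. (X w, A w, Y w)) (NX \<Otimes>\<^sub>M NA \<Otimes>\<^sub>M NY))"
    and "cond_indep M (gen_sigma M RY (count_space UNIV))
           (gen_sigma M (\<lambda>w. (Y w, RM w)) (NY \<Otimes>\<^sub>M count_space UNIV))
           (gen_sigma M (\<lambda>w. (X w, A w, Mv w)) (NX \<Otimes>\<^sub>M NA \<Otimes>\<^sub>M NM))"
    and "\<And>rm ry. AE w in M.
           cprob M (gen_sigma M (\<lambda>w. (X w, A w, Mv w, Y w)) (NX \<Otimes>\<^sub>M NA \<Otimes>\<^sub>M NM \<Otimes>\<^sub>M NY))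
             (event_of M (\<lambda>v. RM v = rm \<and> RY v = ry)) w > 0"
  shows "AE w in M.
     cprob M (gen_sigma M (\<lambda>w. (X w, A w)) (NX \<Otimes>\<^sub>M NA))
         (event_of M (\<lambda>v. \<not> RM v \<and> \<not> RY v)) w
     / cprob M (gen_sigma M (\<lambda>w. (X w, A w)) (NX \<Otimes>\<^sub>M NA))
         (event_of M (\<lambda>v. RM v \<and> RY v)) w
     = cexp_on M (gen_sigma M (\<lambda>w. (X w, A w)) (NX \<Otimes>\<^sub>M NA))
         (\<lambda>v. codds_on M (gen_sigma M (\<lambda>w. (X w, A w, Mv w, Y w)) (NX \<Otimes>\<^sub>M NA \<Otimes>\<^sub>M NM \<Otimes>\<^sub>M NY))
                  RM (event_of M RY) v
             * codds_on M (gen_sigma M (\<lambda>w. (X w, A w, Mv w, Y w)) (NX \<Otimes>\<^sub>M NA \<Otimes>\<^sub>M NM \<Otimes>\<^sub>M NY))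
                  RY (event_of M RM) v)
         (event_of M (\<lambda>v. RM v \<and> RY v)) w"
proof -
  interpret response_model M NX NA NM NY X A Mv Y RM RY
    using assms by (simp add: response_model_def response_model_axioms_def)
  have E11: "event_of M (\<lambda>v. RM v \<and> RY v) \<in> sets M"
    and E00: "event_of M (\<lambda>v. \<not> RM v \<and> \<not> RY v) \<in> sets M"
    unfolding event_of_def by measurable
  have "AE w in M. real_cond_exp M sigma_XA
      (\<lambda>v. indicator (event_of M (\<lambda>v. RM v \<and> RY v)) v
        * (codds_on M sigma_XAMY RM (event_of M RY) v * codds_on M sigma_XAMY RY (event_of M RM) v)) w
    = cprob M sigma_XA (event_of M (\<lambda>v. \<not> RM v \<and> \<not> RY v)) w"
    by (rule real_cond_exp_indicator_mult_eq_cprob[OF subalgebra_sigma_XAMY subalgebra_sigma_XAMY_XA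
          measurable_odds_product E11 E00 odds_product_mult_cprob])
  then show ?thesis
    unfolding cexp_on_def by eventually_elim simp
qed

end
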